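(* Let $q\in\mathbb{N}$ be odd, $\alpha_2\in\mathbb{Z}$ with $\gcd(\alpha_2,q)=1$, and let $q_1>1$, $q_2$ be positive integers with $q_1q_2=\operatorname{rad}(q)$. For $N\in\mathbb{N}$ with $N\le q$ define $$L(q_1):=\sum_{\substack{|x_1|,|x_2|\le N\\ \gcd(x_1^2+\alpha_2x_2^2,q_2)=1}}\left(\frac{x_1^2+\alpha_2x_2^2}{q_1}\right).$$ Then for every $\varepsilon>0$, $L(q_1)\ll_\varepsilon Nq_1^2q^{\varepsilon}$.
   Context: $\operatorname{rad}(q)$ is the product of the distinct primes dividing $q$; $\left(\frac{\cdot}{q_1}\right)$ is the Jacobi symbol. *)

theory Defs
  imports "HOL-Analysis.Analysis" "HOL-Number_Theory.Number_Theory"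
begin

definition rad :: "nat \<Rightarrow> nat" where
  "rad q = (\<Prod>p\<in>prime_factors q. p)"

definition Jacobi :: "int \<Rightarrow> nat \<Rightarrow> int" where
  "Jacobi a n = (\<Prod>p\<in>prime_factors n. Legendre a (int p) ^ multiplicity p n)"

definition Lsum :: "int \<Rightarrow> nat \<Rightarrow> nat \<Rightarrow> nat \<Rightarrow> int" where
  "Lsum \<alpha>2 q1 q2 N =
     (\<Sum>(x1, x2) \<in> {(x1, x2). x1 \<in> {-int N..int N} \<and> x2 \<in> {-int N..int N}
                         \<and> coprime (x1^2 + \<alpha>2 * x2^2) (int q2)}.
        Jacobi (x1^2 + \<alpha>2 * x2^2) q1)"

end

theory Submission
  imports Defs "HOL-Computational_Algebra.Squarefree"
begin

text \<open>Since \<open>q\<^sub>1\<close> divides the squarefree number \<open>rad q\<close>, the Jacobi symbol \<open>\<chi> = (\<cdot>/q\<^sub>1)\<close> is a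
  product of Legendre symbols, hence completely multiplicative and \<open>q\<^sub>1\<close>-periodic.
  Inclusion--exclusion over the primes of \<open>q\<^sub>2\<close> replaces the condition
  \<open>gcd(x\<^sub>1\<^sup>2 + \<alpha> x\<^sub>2\<^sup>2, q\<^sub>2) = 1\<close> by divisibility conditions \<open>d | x\<^sub>1\<^sup>2 + \<alpha> x\<^sub>2\<^sup>2\<close>, one for each
  squarefree \<open>d | q\<^sub>2\<close>.  Each such summand is periodic modulo \<open>M = d q\<^sub>1\<close> in both variables, and
  its sum over a full period vanishes: the Chinese remainder theorem gives \<open>c = u\<^sup>2 + \<alpha> v\<^sup>2\<close>
  prime to \<open>M\<close> with \<open>\<chi>(c) = -1\<close>, and multiplication by \<open>u + v\<surd>-\<alpha>\<close> permutes the residue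
  pairs modulo \<open>M\<close> while changing the sign of every term.  So only incomplete periods
  contribute: at most \<open>2 (2N + 1)\<close> times the mass of one period of a row, which is at most
  \<open>q\<^sub>1 2\<^bsup>\<omega>(d)\<^esup>\<close> because a quadratic congruence has at most two roots modulo a prime.
  Summing over \<open>d\<close> gives \<open>|L(q\<^sub>1)| \<le> 2 (2N + 1) q\<^sub>1 4\<^bsup>\<omega>(q\<^sub>2)\<^esup>\<close>, and \<open>4\<^bsup>\<omega>(n)\<^esup> \<le> C\<^sub>\<epsilon> n\<^sup>\<epsilon>\<close>.\<close>

section \<open>Legendre symbols\<close>

lemma Legendre_cong:
  assumes "[a = b] (mod p)"
  shows "Legendre a p = Legendre b p"
proof -
  have "[a = 0] (mod p) \<longleftrightarrow> [b = 0] (mod p)" "QuadRes p a \<longleftrightarrow> QuadRes p b"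
    using assms unfolding QuadRes_def by (meson cong_sym cong_trans)+
  then show ?thesis unfolding Legendre_def by simp
qed

lemma abs_Legendre_le_1: "\<bar>Legendre a p\<bar> \<le> 1"
  unfolding Legendre_def by auto

lemma Legendre_1: "p > 1 \<Longrightarrow> Legendre 1 p = 1"
  unfolding Legendre_def QuadRes_def by (auto simp: cong_def intro: exI[of _ 1])

lemma Legendre_mult:
  assumes "prime p" "p > 2"
  shows "Legendre (a * b) (int p) = Legendre a (int p) * Legendre b (int p)"
proof -
  have "[Legendre (a * b) (int p) = Legendre a (int p) * Legendre b (int p)] (mod int p)"
    using euler_criterion[OF assms] cong_mult[OF euler_criterion[OF assms] euler_criterion[OF assms]]
    by (metis cong_sym cong_trans power_mult_distrib)
  then have dvd: "int p dvd Legendre (a * b) (int p) - Legendre a (int p) * Legendre b (int p)"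
    by (simp add: cong_iff_dvd_diff)
  have "\<bar>Legendre a (int p) * Legendre b (int p)\<bar> \<le> 1"
    unfolding abs_mult by (intro mult_le_one abs_Legendre_le_1) auto
  then have "\<bar>Legendre (a * b) (int p) - Legendre a (int p) * Legendre b (int p)\<bar> < int p"
    using abs_Legendre_le_1[of "a * b" "int p"] assms(2) by linarith
  with dvd show ?thesis
    by (metis dvd_imp_le_int abs_of_nat eq_iff_diff_eq_0 not_le)
qed

lemma Legendre_nonresidue_exists:
  fixes p :: int
  assumes "prime p" "p > 2"
  shows "\<exists>n::nat. Legendre (int n) p = -1"
proof -
  let ?sq = "\<lambda>x::int. x^2 mod p"
  have "(p - 1)^2 = 1 + p * (p - 2)"
    by (simp add: power2_eq_square algebra_simps)
  then have "?sq 1 = ?sq (p - 1)" by simp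
  then have "\<not> inj_on ?sq {0..<p}"
  proof (intro notI)
    assume "inj_on ?sq {0..<p}"
    then have "1 = p - 1"
      by (rule inj_onD) (use assms \<open>?sq 1 = ?sq (p - 1)\<close> in auto)
    then show False using assms by simp
  qed
  then have "?sq ` {0..<p} \<noteq> {0..<p}"
    by (metis eq_card_imp_inj_on finite_atLeastLessThan_int)
  moreover have "?sq ` {0..<p} \<subseteq> {0..<p}"
    using assms by auto
  ultimately obtain r where r: "r \<in> {0..<p}" "r \<notin> ?sq ` {0..<p}" by blast
  have "0 \<in> ?sq ` {0..<p}"
    using assms by (auto intro!: image_eqI[of _ _ 0])
  then have "r \<noteq> 0"
    using r by auto
  then have "\<not> [r = 0] (mod p)"
    using r by (simp add: cong_def)
  moreover have "\<not> QuadRes p r"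
  proof
    assume "QuadRes p r"
    then obtain y where "[y^2 = r] (mod p)" unfolding QuadRes_def by blast
    then have "?sq (y mod p) = r"
      using r(1) by (simp add: cong_def power_mod)
    moreover have "y mod p \<in> {0..<p}" using assms by simp
    ultimately show False using r(2) by blast
  qed
  ultimately have "Legendre (int (nat r)) p = -1"
    using r(1) unfolding Legendre_def by simp
  then show ?thesis ..
qed

lemma sum_two_squares_nonresidue:
  fixes p :: int
  assumes "prime p" "p > 2"
  shows "\<exists>s t. Legendre (s^2 + t^2) p = -1"
proof -
  \<comment> \<open>If \<open>n\<close> is the least positive nonresidue, then \<open>n - 1\<close> is a nonzero residue \<open>s\<^sup>2\<close>.\<close>
  define n where "n = (LEAST n::nat. Legendre (int n) p = -1)"
  have n: "Legendre (int n) p = -1"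
    unfolding n_def using Legendre_nonresidue_exists[OF assms] by (rule LeastI_ex)
  have "n \<noteq> 0"
  proof
    assume "n = 0"
    with n show False by (simp add: Legendre_def)
  qed
  moreover have "n \<noteq> 1"
    using n Legendre_1[of p] assms by auto
  ultimately have "n \<ge> 2" by simp
  have "Legendre (int (n - 1)) p \<noteq> -1"
    using not_less_Least[of "n - 1" "\<lambda>n. Legendre (int n) p = -1"] \<open>n \<ge> 2\<close>
    unfolding n_def by auto
  moreover have "\<not> [int (n - 1) = 0] (mod p)"
  proof
    assume "[int (n - 1) = 0] (mod p)"
    then have "[int (n - 1) + 1 = 0 + 1] (mod p)"
      by (intro cong_add cong_refl)
    then have "[int n = 1] (mod p)"
      using \<open>n \<ge> 2\<close> by simp
    then show False
      using n Legendre_cong Legendre_1 assms by fastforce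
  qed
  ultimately have "QuadRes p (int (n - 1))"
    unfolding Legendre_def by (auto split: if_splits)
  then obtain s where "[s^2 = int (n - 1)] (mod p)"
    unfolding QuadRes_def by blast
  then have "[s^2 + 1 = int (n - 1) + 1] (mod p)"
    by (intro cong_add cong_refl)
  then have "[s^2 + 1^2 = int n] (mod p)"
    using \<open>n \<ge> 2\<close> by simp
  then show ?thesis
    using n Legendre_cong by metis
qed

lemma binary_form_nonresidue:
  fixes p \<alpha> :: int
  assumes "prime p" "p > 2" "\<not> p dvd \<alpha>"
  shows "\<exists>u v. Legendre (u^2 + \<alpha> * v^2) p = -1"
proof (cases "QuadRes p \<alpha>")
  case False
  then have "Legendre (0^2 + \<alpha> * 1^2) p = -1"
    using assms(3) unfolding Legendre_def by (simp add: cong_0_iff)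
  then show ?thesis by blast
next
  case True
  then obtain w where w: "[w^2 = \<alpha>] (mod p)"
    unfolding QuadRes_def by blast
  have "coprime w p"
    using w assms prime_imp_coprime
    by (metis cong_dvd_iff cong_sym coprime_commute dvd_mult power2_eq_square)
  then obtain w' where w': "[w * w' = 1] (mod p)"
    using cong_solve_coprime_int by blast
  obtain s t where st: "Legendre (s^2 + t^2) p = -1"
    using sum_two_squares_nonresidue[OF assms(1,2)] by blast
  have "[\<alpha> * (w' * t)^2 = (w * w')^2 * t^2] (mod p)"
    using w by (metis cong_scalar_right cong_sym mult.assoc power_mult_distrib)
  also have "[(w * w')^2 * t^2 = t^2] (mod p)"
    using cong_pow[OF w', of 2] by (metis cong_scalar_right mult_1 one_power2)
  finally have "[s^2 + \<alpha> * (w' * t)^2 = s^2 + t^2] (mod p)"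
    by (rule cong_add_lcancel[THEN iffD2])
  then show ?thesis
    using st Legendre_cong by metis
qed

section \<open>Prime factors, squarefree numbers and the radical\<close>

lemma coprime_int_iff_prime_factors:
  assumes "n > 0"
  shows "coprime a (int n) \<longleftrightarrow> (\<forall>p\<in>prime_factors n. \<not> int p dvd a)"
proof
  assume "coprime a (int n)"
  then show "\<forall>p\<in>prime_factors n. \<not> int p dvd a"
  proof (intro ballI notI)
    fix p assume "p \<in> prime_factors n" "int p dvd a"
    moreover have "int p dvd int n"
      using \<open>p \<in> prime_factors n\<close> by (simp add: in_prime_factors_iff)
    ultimately have "is_unit (int p)"
      using \<open>coprime a (int n)\<close> coprime_common_divisor by blast
    with \<open>p \<in> prime_factors n\<close> show False by (simp add: in_prime_factors_iff)
  qed
next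
  assume none: "\<forall>p\<in>prime_factors n. \<not> int p dvd a"
  have "coprime a (\<Prod>p\<in>prime_factors n. int p ^ multiplicity p n)"
    using none by (intro prod_coprime_right prime_imp_power_coprime) auto
  also have "(\<Prod>p\<in>prime_factors n. int p ^ multiplicity p n) = int n"
  proof -
    have "(\<Prod>p\<in>prime_factors n. p ^ multiplicity p n) = n"
      using prod_prime_factors[of n] assms by simp
    then show ?thesis
      by (metis (mono_tags) of_nat_power of_nat_prod prod.cong)
  qed
  finally show "coprime a (int n)" .
qed

lemma multiplicity_squarefree:
  assumes "squarefree n" "p \<in> prime_factors n"
  shows "multiplicity p n = 1"
  using assms squarefree_factorial_semiring'[of n] by (cases "n = 0") auto

lemma prod_prime_factors_squarefree:
  assumes "squarefree (n :: nat)"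
  shows "\<Prod>(prime_factors n) = n"
proof -
  have "\<Prod>(prime_factors n) = (\<Prod>p\<in>prime_factors n. p ^ multiplicity p n)"
    using multiplicity_squarefree[OF assms] by simp
  also have "\<dots> = n"
    using prod_prime_factors[of n] assms by (cases "n = 0") auto
  finally show ?thesis .
qed

lemma prime_factors_odd_gt_2:
  fixes n :: nat
  assumes "odd n" "p \<in> prime_factors n"
  shows "p > 2"
proof -
  have "p \<noteq> 2" using assms by (auto simp: in_prime_factors_iff)
  moreover have "p \<ge> 2" using assms by (auto intro: prime_ge_2_nat)
  ultimately show ?thesis by simp
qed

lemma rad_dvd: "rad n dvd n"
proof (cases "n = 0")
  case False
  have "rad n dvd (\<Prod>p\<in>prime_factors n. p ^ multiplicity p n)"
    unfolding rad_def
    by (intro prod_dvd_prod dvd_power) (auto simp: prime_factors_multiplicity)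
  with False show ?thesis
    by (simp add: prod_prime_factors)
qed (simp add: rad_def)

lemma squarefree_rad: "squarefree (rad n)"
  unfolding rad_def
  by (intro squarefree_prod_coprime) (auto intro: primes_coprime squarefree_prime)

lemma squarefree_mult_imp_coprime:
  assumes "squarefree (a * b)"
  shows "coprime a b"
proof (rule coprimeI)
  fix c assume "c dvd a" "c dvd b"
  then have "c^2 dvd a * b"
    by (simp add: power2_eq_square mult_dvd_mono)
  with assms show "is_unit c"
    by (rule squarefreeD)
qed

lemma prod_prime_factors_powr_le:
  assumes "n > 0" "\<epsilon> \<ge> 0" "T \<subseteq> prime_factors n"
  shows "(\<Prod>p\<in>T. real p powr \<epsilon>) \<le> real n powr \<epsilon>"
proof -
  have "(\<Prod>p\<in>T. real p powr \<epsilon>) \<le> (\<Prod>p\<in>prime_factors n. real p powr \<epsilon>)"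
    using assms
    by (intro prod_mono2 ge_one_powr_ge_zero) (auto simp: prime_factors_gt_0_nat Suc_le_eq)
  also have "\<dots> = real (rad n) powr \<epsilon>"
    unfolding rad_def by (simp add: prod_powr_distrib)
  also have "\<dots> \<le> real n powr \<epsilon>"
    using rad_dvd[of n] assms by (intro powr_mono2) (auto intro: dvd_imp_le)
  finally show ?thesis .
qed

lemma power_card_prime_factors_le_powr:
  fixes b \<epsilon> :: real
  assumes "b \<ge> 1" "\<epsilon> > 0"
  shows "\<exists>C. \<forall>n>0. b ^ card (prime_factors n) \<le> C * real n powr \<epsilon>"
proof -
  define B where "B = nat \<lceil>b powr (1 / \<epsilon>)\<rceil>"
  have large: "b \<le> real p powr \<epsilon>" if "p \<ge> B" for p
  proof -
    have "b powr (1 / \<epsilon>) \<le> real p"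
      using that unfolding B_def by linarith
    then have "(b powr (1 / \<epsilon>)) powr \<epsilon> \<le> real p powr \<epsilon>"
      using assms by (intro powr_mono2) auto
    then show ?thesis
      using assms by (simp add: powr_powr)
  qed
  have "b ^ card (prime_factors n) \<le> b ^ B * real n powr \<epsilon>" if "n > 0" for n
  proof -
    define S where "S = {p\<in>prime_factors n. p < B}"
    define T where "T = {p\<in>prime_factors n. p \<ge> B}"
    have "prime_factors n = S \<union> T" "S \<inter> T = {}" "finite S" "finite T"
      unfolding S_def T_def by auto
    then have split: "b ^ card (prime_factors n) = b ^ card S * b ^ card T"
      by (simp add: card_Un_disjoint power_add)
    have "card S \<le> B"
      using card_mono[of "{..<B}" S] unfolding S_def by auto
    then have "b ^ card S \<le> b ^ B"
      using assms by (intro power_increasing) auto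
    moreover have "b ^ card T \<le> (\<Prod>p\<in>T. real p powr \<epsilon>)"
      using large assms unfolding T_def by (subst prod_constant[symmetric], intro prod_mono) auto
    moreover have "(\<Prod>p\<in>T. real p powr \<epsilon>) \<le> real n powr \<epsilon>"
      using \<open>n > 0\<close> \<open>\<epsilon> > 0\<close> unfolding T_def by (intro prod_prime_factors_powr_le) auto
    ultimately show ?thesis
      unfolding split using assms by (auto intro!: mult_mono)
  qed
  then show ?thesis by blast
qed

section \<open>The Jacobi symbol modulo a squarefree number\<close>

lemma Jacobi_squarefree:
  "squarefree n \<Longrightarrow> Jacobi a n = (\<Prod>p\<in>prime_factors n. Legendre a (int p))"
  unfolding Jacobi_def by (simp add: multiplicity_squarefree)

lemma Jacobi_cong: "[a = b] (mod int n) \<Longrightarrow> Jacobi a n = Jacobi b n"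
  unfolding Jacobi_def
  by (intro prod.cong refl arg_cong2[where f = power] Legendre_cong)
     (auto intro: cong_dvd_modulus simp: in_prime_factors_iff)

lemma Jacobi_mult:
  assumes "odd n"
  shows "Jacobi (a * b) n = Jacobi a n * Jacobi b n"
proof -
  have "Legendre (a * b) (int p) = Legendre a (int p) * Legendre b (int p)"
    if "p \<in> prime_factors n" for p
    using that assms prime_factors_odd_gt_2 by (intro Legendre_mult) auto
  then show ?thesis
    unfolding Jacobi_def by (simp add: power_mult_distrib prod.distrib cong: prod.cong)
qed

lemma abs_Jacobi_le_1: "\<bar>Jacobi a n\<bar> \<le> 1"
  unfolding Jacobi_def abs_prod by (intro prod_le_1) (auto simp: abs_Legendre_le_1 power_abs power_le_one)

lemma Jacobi_0:
  assumes "n > 1"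
  shows "Jacobi 0 n = 0"
proof -
  obtain p where "prime p" "p dvd n"
    using assms prime_factor_nat[of n] by auto
  with assms have "p \<in> prime_factors n"
    by (auto simp: in_prime_factors_iff)
  then have "Legendre 0 (int p) ^ multiplicity p n = 0"
    by (simp add: Legendre_def prime_factors_multiplicity)
  then show ?thesis
    unfolding Jacobi_def using \<open>p \<in> prime_factors n\<close> by (metis finite_set_mset prod_zero_iff)
qed

lemma binary_form_chinese_remainder:
  fixes a b u0 v0 \<alpha> :: int
  assumes "coprime a b"
  obtains u v where "[u^2 + \<alpha> * v^2 = u0^2 + \<alpha> * v0^2] (mod a)" "[u^2 + \<alpha> * v^2 = 1] (mod b)"
proof -
  obtain u where u: "[u = u0] (mod a)" "[u = 1] (mod b)"
    using binary_chinese_remainder_int[OF assms] by blast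
  obtain v where v: "[v = v0] (mod a)" "[v = 0] (mod b)"
    using binary_chinese_remainder_int[OF assms] by blast
  have "[u^2 + \<alpha> * v^2 = u0^2 + \<alpha> * v0^2] (mod a)" "[u^2 + \<alpha> * v^2 = 1^2 + \<alpha> * 0^2] (mod b)"
    by (intro cong_add cong_mult cong_pow cong_refl u v)+
  then show ?thesis
    using that by simp
qed

lemma binary_form_character_twist:
  fixes P :: "nat set" and \<alpha> m :: int
  assumes "finite P" "P \<noteq> {}"
    and P: "\<forall>p\<in>P. prime p \<and> p > 2 \<and> \<not> int p dvd \<alpha>"
    and "coprime m (int (\<Prod>P))"
  shows "\<exists>u v. (\<Prod>p\<in>P. Legendre (u^2 + \<alpha> * v^2) (int p)) = -1
           \<and> coprime (u^2 + \<alpha> * v^2) (m * int (\<Prod>P))"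
proof -
  obtain p where "p \<in> P" using assms(2) by blast
  with P have p: "prime p" "p > 2" "\<not> int p dvd \<alpha>" by auto
  define m' where "m' = m * int (\<Prod>(P - {p}))"
  have prod_P: "int (\<Prod>P) = int p * int (\<Prod>(P - {p}))"
    using prod.remove[OF assms(1) \<open>p \<in> P\<close>, of id] by simp
  have "coprime (int p) m"
    using assms(4) prod_P by (simp add: coprime_commute)
  moreover have "coprime p (\<Prod>(P - {p}))"
    using P p by (auto intro!: prod_coprime_right primes_coprime)
  ultimately have "coprime (int p) m'"
    unfolding m'_def by (simp del: of_nat_prod)
  obtain u0 v0 where uv0: "Legendre (u0^2 + \<alpha> * v0^2) (int p) = -1"
    using binary_form_nonresidue[of "int p" \<alpha>] p by auto
  \<comment> \<open>\<open>c\<close> is a nonresidue modulo \<open>p\<close> and \<open>\<equiv> 1\<close> modulo \<open>m\<close> and the other primes of \<open>P\<close>.\<close>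
  obtain u v where uv: "[u^2 + \<alpha> * v^2 = u0^2 + \<alpha> * v0^2] (mod int p)" "[u^2 + \<alpha> * v^2 = 1] (mod m')"
    using binary_form_chinese_remainder[OF \<open>coprime (int p) m'\<close>] by blast
  define c where "c = u^2 + \<alpha> * v^2"
  have c_p: "Legendre c (int p) = -1"
    using uv(1) uv0 Legendre_cong unfolding c_def by metis
  have c_m': "[c = 1] (mod m')"
    using uv(2) unfolding c_def .
  have "Legendre c (int q) = 1" if "q \<in> P - {p}" for q
  proof -
    have "int q dvd m'"
      unfolding m'_def using that assms(1) by (simp add: dvd_prodI)
    then have "[c = 1] (mod int q)"
      using c_m' cong_dvd_modulus by blast
    then show ?thesis
      using that P Legendre_cong Legendre_1 prime_gt_1_nat by (metis DiffD1 of_nat_1 of_nat_less_iff)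
  qed
  then have "(\<Prod>q\<in>P. Legendre c (int q)) = -1"
    using prod.remove[OF assms(1) \<open>p \<in> P\<close>, of "\<lambda>q. Legendre c (int q)"] c_p by simp
  moreover have "coprime c (int p)"
  proof -
    have "\<not> int p dvd c"
      using c_p by (auto simp: Legendre_def cong_0_iff)
    then show ?thesis
      using p prime_imp_coprime[of "int p" c] by (simp add: coprime_commute)
  qed
  moreover have "coprime c m'"
    using c_m' by (metis cong_imp_coprime cong_sym coprime_1_left)
  moreover have "m * int (\<Prod>P) = int p * m'"
    unfolding prod_P m'_def by (simp only: ac_simps)
  ultimately have "(\<Prod>q\<in>P. Legendre c (int q)) = -1 \<and> coprime c (m * int (\<Prod>P))"
    by (simp only: coprime_mult_right_iff)
  then show ?thesis
    unfolding c_def by blast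
qed

lemma binary_form_Jacobi_twist:
  assumes "squarefree q" "odd q" "q > 1" "coprime \<alpha> (int q)" "coprime m (int q)"
  shows "\<exists>u v. Jacobi (u^2 + \<alpha> * v^2) q = -1 \<and> coprime (u^2 + \<alpha> * v^2) (m * int q)"
proof -
  have "prime_factors q \<noteq> {}"
    using assms(3) by (simp add: prime_factorization_empty_iff)
  moreover have "\<forall>p\<in>prime_factors q. prime p \<and> p > 2 \<and> \<not> int p dvd \<alpha>"
    using assms(2-4) prime_factors_odd_gt_2 coprime_int_iff_prime_factors[of q \<alpha>] by auto
  ultimately show ?thesis
    using binary_form_character_twist[of "prime_factors q" \<alpha> m] assms
    by (simp add: Jacobi_squarefree prod_prime_factors_squarefree)
qed

section \<open>Complete sums over the binary form\<close>

text \<open>The map \<open>(y, z) \<mapsto> (y u - \<alpha> z v, y v + z u)\<close> is multiplication by \<open>u + v\<surd>-\<alpha>\<close>: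
  it multiplies the form by \<open>c = u\<^sup>2 + \<alpha> v\<^sup>2\<close>, and it permutes the residue pairs modulo \<open>M\<close>
  because its determinant \<open>c\<close> is a unit modulo \<open>M\<close>.\<close>

lemma inj_on_binary_form_multiplication:
  fixes M \<alpha> u v :: int
  assumes "coprime (u^2 + \<alpha> * v^2) M"
  shows "inj_on (\<lambda>(y, z). ((y * u - \<alpha> * z * v) mod M, (y * v + z * u) mod M)) ({0..<M} \<times> {0..<M})"
proof (rule inj_onI)
  fix p p' assume pp': "p \<in> {0..<M} \<times> {0..<M}" "p' \<in> {0..<M} \<times> {0..<M}"
    "(\<lambda>(y, z). ((y * u - \<alpha> * z * v) mod M, (y * v + z * u) mod M)) p
       = (\<lambda>(y, z). ((y * u - \<alpha> * z * v) mod M, (y * v + z * u) mod M)) p'"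
  obtain y z y' z' where p: "p = (y, z)" "p' = (y', z')"
    by (cases p, cases p')
  note yz = pp'[unfolded p]
  define a where "a = y - y'"
  define b where "b = z - z'"
  have d1: "M dvd a * u - \<alpha> * b * v" and d2: "M dvd a * v + b * u"
    using yz(3) unfolding a_def b_def by (auto simp: mod_eq_dvd_iff algebra_simps)
  have "(u^2 + \<alpha> * v^2) * a = u * (a * u - \<alpha> * b * v) + \<alpha> * v * (a * v + b * u)"
    "(u^2 + \<alpha> * v^2) * b = u * (a * v + b * u) - v * (a * u - \<alpha> * b * v)"
    by (simp_all add: power2_eq_square algebra_simps)
  then have "M dvd (u^2 + \<alpha> * v^2) * a" "M dvd (u^2 + \<alpha> * v^2) * b"
    using d1 d2 by simp_all
  then have "M dvd a" "M dvd b"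
    using assms by (metis coprime_commute coprime_dvd_mult_right_iff)+
  then show "p = p'"
    using yz(1,2) unfolding p a_def b_def by (auto simp: mod_eq_dvd_iff[symmetric])
qed

lemma sum_binary_form_odd_eq_0:
  fixes g :: "int \<Rightarrow> real" and M \<alpha> u v :: int
  assumes "M > 0" and per: "\<And>a b. [a = b] (mod M) \<Longrightarrow> g a = g b"
    and "coprime (u^2 + \<alpha> * v^2) M" and odd: "\<And>a. g ((u^2 + \<alpha> * v^2) * a) = - g a"
  shows "(\<Sum>y\<in>{0..<M}. \<Sum>z\<in>{0..<M}. g (y^2 + \<alpha> * z^2)) = 0"
proof -
  define c where "c = u^2 + \<alpha> * v^2"
  define A where "A = {0..<M} \<times> {0..<M}"
  define F where "F = (\<lambda>(y, z). g (y^2 + \<alpha> * z^2))"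
  define T where "T = (\<lambda>(y, z). ((y * u - \<alpha> * z * v) mod M, (y * v + z * u) mod M))"
  have "inj_on T A"
    unfolding T_def A_def using assms(3) by (rule inj_on_binary_form_multiplication)
  moreover have "T ` A \<subseteq> A"
    unfolding A_def T_def using \<open>M > 0\<close> by auto
  ultimately have "T ` A = A"
    unfolding A_def by (intro endo_inj_surj) auto
  have FT: "F (T p) = - F p" for p
  proof -
    obtain y z where p: "p = (y, z)" by (cases p)
    have "[((y * u - \<alpha> * z * v) mod M)^2 + \<alpha> * ((y * v + z * u) mod M)^2
           = (y * u - \<alpha> * z * v)^2 + \<alpha> * (y * v + z * u)^2] (mod M)"
      by (intro cong_add cong_mult cong_pow cong_refl) (auto simp: cong_def)
    moreover have "(y * u - \<alpha> * z * v)^2 + \<alpha> * (y * v + z * u)^2 = c * (y^2 + \<alpha> * z^2)"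
      unfolding c_def by (simp add: power2_eq_square algebra_simps)
    ultimately show ?thesis
      unfolding F_def T_def p using per odd c_def by auto
  qed
  have "sum F A = sum F (T ` A)"
    using \<open>T ` A = A\<close> by simp
  also have "\<dots> = - sum F A"
    using \<open>inj_on T A\<close> by (simp add: sum.reindex FT sum_negf)
  finally show ?thesis
    unfolding A_def F_def by (simp add: sum.cartesian_product)
qed

lemma card_square_roots_mod_prime:
  fixes a :: int
  assumes "prime p"
  shows "card {r\<in>{0..<int p}. int p dvd r^2 + a} \<le> 2"
proof (cases "{r\<in>{0..<int p}. int p dvd r^2 + a} = {}")
  case False
  then obtain r0 where r0: "r0 \<in> {0..<int p}" "int p dvd r0^2 + a" by blast
  have "{r\<in>{0..<int p}. int p dvd r^2 + a} \<subseteq> {r0, (-r0) mod int p}"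
  proof
    fix r assume r: "r \<in> {r\<in>{0..<int p}. int p dvd r^2 + a}"
    have "(r^2 + a) - (r0^2 + a) = (r - r0) * (r - (-r0))"
      by (simp add: power2_eq_square algebra_simps)
    then have "int p dvd (r - r0) * (r - (-r0))"
      using r r0 by (metis (no_types, lifting) dvd_diff mem_Collect_eq)
    then have "int p dvd r - r0 \<or> int p dvd r - (-r0)"
      using assms by (simp add: prime_dvd_mult_iff)
    then have "r mod int p = r0 mod int p \<or> r mod int p = (-r0) mod int p"
      by (simp only: mod_eq_dvd_iff)
    then show "r \<in> {r0, (-r0) mod int p}"
      using r r0 by auto
  qed
  then have "card {r\<in>{0..<int p}. int p dvd r^2 + a} \<le> card {r0, (-r0) mod int p}"
    by (intro card_mono) auto
  also have "\<dots> \<le> 2"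
    by (simp add: card_insert_if)
  finally show ?thesis .
next
  case True
  then show ?thesis by (metis card.empty zero_le)
qed

lemma inj_on_div_residues_mod_primes:
  fixes D :: "nat set"
  assumes "finite D" and primes: "\<forall>p\<in>D. prime p"
  shows "inj_on (\<lambda>x. (x div int (\<Prod>D), restrict (\<lambda>p. x mod int p) D)) A"
proof (rule inj_onI)
  fix x y
  assume "(x div int (\<Prod>D), restrict (\<lambda>p. x mod int p) D) = (y div int (\<Prod>D), restrict (\<lambda>p. y mod int p) D)"
  then have div: "x div int (\<Prod>D) = y div int (\<Prod>D)"
    and restr: "restrict (\<lambda>p. x mod int p) D = restrict (\<lambda>p. y mod int p) D"
    by auto
  have "\<forall>p\<in>D. [x = y] (mod int p)"
  proof
    fix p assume "p \<in> D"
    with fun_cong[OF restr, of p] show "[x = y] (mod int p)"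
      by (simp add: cong_def)
  qed
  then have "[x = y] (mod (\<Prod>p\<in>D. int p))"
    using primes by (intro cong_cong_prod_coprime) (auto intro: primes_coprime)
  then have "x mod int (\<Prod>D) = y mod int (\<Prod>D)"
    unfolding cong_def by simp
  with div show "x = y"
    by (metis div_mult_mod_eq)
qed

lemma card_square_roots_mod_prod_primes:
  fixes D :: "nat set" and a :: int and Q :: nat
  assumes "finite D" and primes: "\<forall>p\<in>D. prime p"
  shows "card {x\<in>{0..<int (\<Prod>D) * int Q}. \<forall>p\<in>D. int p dvd x^2 + a} \<le> Q * 2 ^ card D"
proof -
  define d where "d = int (\<Prod>D)"
  have "d > 0"
    unfolding d_def using assms by (simp add: prime_gt_0_nat prod_pos)
  define R where "R p = {r\<in>{0..<int p}. int p dvd r^2 + a}" for p :: nat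
  define S where "S = {x\<in>{0..<d * int Q}. \<forall>p\<in>D. int p dvd x^2 + a}"
  define \<phi> where "\<phi> x = (x div d, restrict (\<lambda>p. x mod int p) D)" for x :: int
  have "inj_on \<phi> S"
    unfolding \<phi>_def d_def using assms by (rule inj_on_div_residues_mod_primes)
  moreover have "\<phi> ` S \<subseteq> {0..<int Q} \<times> PiE D R"
  proof
    fix z assume "z \<in> \<phi> ` S"
    then obtain x where x: "x \<in> S" "z = \<phi> x" by blast
    have x_range: "0 \<le> x" "x < d * int Q"
      using x unfolding S_def by auto
    have "d * (x div d) \<le> x"
      using mult_div_mod_eq[of d x] pos_mod_sign[of d x] \<open>d > 0\<close> by linarith
    then have "d * (x div d) < d * int Q"
      using x_range by linarith
    then have "0 \<le> x div d" "x div d < int Q"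
      using \<open>d > 0\<close> x_range by (auto simp: pos_imp_zdiv_nonneg_iff intro: mult_left_less_imp_less)
    moreover have "x mod int p \<in> R p" if "p \<in> D" for p
    proof -
      have "[(x mod int p)^2 + a = x^2 + a] (mod int p)"
        by (intro cong_add cong_pow) (auto simp: cong_def)
      then show ?thesis
        using x that primes prime_gt_0_nat unfolding S_def R_def by (auto simp: cong_dvd_iff)
    qed
    ultimately show "z \<in> {0..<int Q} \<times> PiE D R"
      using x unfolding \<phi>_def by auto
  qed
  moreover have "finite (R p)" for p
    unfolding R_def by (rule finite_subset[of _ "{0..<int p}"]) auto
  then have "finite (PiE D R)"
    using assms by (intro finite_PiE)
  ultimately have "card S \<le> card ({0..<int Q} \<times> PiE D R)"
    by (metis card_image card_mono finite_SigmaI finite_atLeastLessThan_int)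
  also have "\<dots> = Q * (\<Prod>p\<in>D. card (R p))"
    using assms by (simp add: card_cartesian_product card_PiE)
  also have "\<dots> \<le> Q * 2 ^ card D"
    using primes card_square_roots_mod_prime unfolding R_def
    by (metis (no_types, lifting) mult_left_mono prod_constant prod_mono zero_le)
  finally show ?thesis
    unfolding S_def d_def .
qed

section \<open>Incomplete sums of periodic functions\<close>

lemma sum_periodic_interval:
  fixes h :: "int \<Rightarrow> 'a::comm_monoid_add" and P :: int
  assumes "P > 0" and per: "\<And>s t. [s = t] (mod P) \<Longrightarrow> h s = h t"
  shows "(\<Sum>t\<in>{a..<a+P}. h t) = (\<Sum>t\<in>{0..<P}. h t)"
proof -
  have inj: "inj_on (\<lambda>t. t mod P) {a..<a+P}"
  proof (rule inj_onI)
    fix s t assume st: "s \<in> {a..<a+P}" "t \<in> {a..<a+P}" "s mod P = t mod P"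
    then have "P dvd s - t" by (simp add: mod_eq_dvd_iff)
    moreover have "\<bar>s - t\<bar> < P" using st by auto
    ultimately show "s = t" by (metis dvd_imp_le_int abs_le_D1 eq_iff_diff_eq_0 not_le)
  qed
  have "(\<lambda>t. t mod P) ` {a..<a+P} = {0..<P}"
    using inj \<open>P > 0\<close> by (intro card_subset_eq) (auto simp: card_image)
  with inj have "bij_betw (\<lambda>t. t mod P) {a..<a+P} {0..<P}"
    by (simp add: bij_betw_def)
  then have "(\<Sum>t\<in>{a..<a+P}. h (t mod P)) = (\<Sum>t\<in>{0..<P}. h t)"
    by (rule sum.reindex_bij_betw)
  moreover have "h (t mod P) = h t" for t
    by (rule per) (simp add: cong_def)
  ultimately show ?thesis by simp
qed

lemma sum_periodic_interval_approx:
  fixes h :: "int \<Rightarrow> real" and P :: nat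
  assumes "P > 0" and per: "\<And>s t. [s = t] (mod int P) \<Longrightarrow> h s = h t"
  shows "\<bar>(\<Sum>t\<in>{a..<a+int n}. h t) - real (n div P) * (\<Sum>t\<in>{0..<int P}. h t)\<bar>
           \<le> (\<Sum>t\<in>{0..<int P}. \<bar>h t\<bar>)"
proof (induction n arbitrary: a rule: less_induct)
  case (less n)
  show ?case
  proof (cases "n < P")
    case True
    have "\<bar>\<Sum>t\<in>{a..<a+int n}. h t\<bar> \<le> (\<Sum>t\<in>{a..<a+int P}. \<bar>h t\<bar>)"
      using True by (intro order.trans[OF sum_abs] sum_mono2) auto
    also have "\<dots> = (\<Sum>t\<in>{0..<int P}. \<bar>h t\<bar>)"
      using assms by (intro sum_periodic_interval) auto
    finally show ?thesis using True by simp
  next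
    case False
    define m where "m = n - P"
    have "{a..<a+int n} = {a..<a+int P} \<union> {a+int P..<(a+int P)+int m}"
      using False unfolding m_def by auto
    then have "(\<Sum>t\<in>{a..<a+int n}. h t)
        = (\<Sum>t\<in>{a..<a+int P}. h t) + (\<Sum>t\<in>{a+int P..<(a+int P)+int m}. h t)"
      by (simp add: sum.union_disjoint ivl_disj_int_two)
    also have "(\<Sum>t\<in>{a..<a+int P}. h t) = (\<Sum>t\<in>{0..<int P}. h t)"
      using assms by (intro sum_periodic_interval) auto
    finally show ?thesis
      using less.IH[of m "a + int P"] assms False
      by (simp add: m_def le_div_geq algebra_simps)
  qed
qed

lemma sum_square_periodic_zero_mean:
  fixes h :: "int \<Rightarrow> int \<Rightarrow> real" and M n :: nat and B :: real
  assumes "M > 0"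
    and per: "\<And>x x' y y'. [x = x'] (mod int M) \<Longrightarrow> [y = y'] (mod int M) \<Longrightarrow> h x y = h x' y'"
    and zero: "(\<Sum>x\<in>{0..<int M}. \<Sum>y\<in>{0..<int M}. h x y) = 0"
    and row: "\<And>x. (\<Sum>y\<in>{0..<int M}. \<bar>h x y\<bar>) \<le> B"
  shows "\<bar>\<Sum>x\<in>{a..<a+int n}. \<Sum>y\<in>{a..<a+int n}. h x y\<bar> \<le> 2 * real n * B"
proof -
  \<comment> \<open>A row consists of \<open>K\<close> full periods, summing to \<open>K S(x)\<close>, plus an error of at most \<open>B\<close>;
    the sum of \<open>S(x)\<close> over the rows is in turn small because \<open>S\<close> has mean zero.\<close>
  define W where "W = {a..<a+int n}"
  define K where "K = real (n div M)"
  define S where "S x = (\<Sum>y\<in>{0..<int M}. h x y)" for x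
  have "0 \<le> (\<Sum>y\<in>{0..<int M}. \<bar>h 0 y\<bar>)"
    by (intro sum_nonneg) simp
  with row[of 0] have "B \<ge> 0" by linarith
  have rows: "\<bar>(\<Sum>y\<in>W. h x y) - K * S x\<bar> \<le> B" for x
    using sum_periodic_interval_approx[of M "h x" a n] \<open>M > 0\<close> per row[of x]
    unfolding W_def K_def S_def by fastforce
  have "\<bar>(\<Sum>x\<in>W. S x) - K * (\<Sum>x\<in>{0..<int M}. S x)\<bar> \<le> (\<Sum>x\<in>{0..<int M}. \<bar>S x\<bar>)"
  proof -
    have "S s = S t" if "[s = t] (mod int M)" for s t
      unfolding S_def using that by (intro sum.cong refl per) auto
    then show ?thesis
      using sum_periodic_interval_approx[of M S a n] \<open>M > 0\<close> unfolding W_def K_def by blast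
  qed
  also have "\<dots> \<le> (\<Sum>x\<in>{0..<int M}. B)"
    unfolding S_def by (intro sum_mono order.trans[OF sum_abs row])
  finally have "\<bar>\<Sum>x\<in>W. S x\<bar> \<le> M * B"
    using zero unfolding S_def by simp
  then have "\<bar>K * (\<Sum>x\<in>W. S x)\<bar> \<le> K * (M * B)"
    unfolding K_def by (simp add: abs_mult mult_left_mono)
  also have "\<dots> \<le> n * B"
  proof -
    have "K * M \<le> n"
      unfolding K_def by (metis div_times_less_eq_dividend of_nat_le_iff of_nat_mult)
    then show ?thesis
      using \<open>B \<ge> 0\<close> by (metis mult.assoc mult_right_mono)
  qed
  finally have main: "\<bar>K * (\<Sum>x\<in>W. S x)\<bar> \<le> n * B" .
  have "\<bar>\<Sum>x\<in>W. (\<Sum>y\<in>W. h x y) - K * S x\<bar> \<le> (\<Sum>x\<in>W. B)"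
    by (intro order.trans[OF sum_abs] sum_mono rows)
  then have err: "\<bar>\<Sum>x\<in>W. (\<Sum>y\<in>W. h x y) - K * S x\<bar> \<le> n * B"
    unfolding W_def by simp
  have "(\<Sum>x\<in>W. \<Sum>y\<in>W. h x y) = (\<Sum>x\<in>W. (\<Sum>y\<in>W. h x y) - K * S x) + K * (\<Sum>x\<in>W. S x)"
    by (simp add: sum_subtractf sum_distrib_left)
  with main err show ?thesis
    unfolding W_def by linarith
qed

section \<open>The bound for \<open>L(q\<^sub>1)\<close>\<close>

lemma prod_of_bool:
  "finite A \<Longrightarrow> (\<Prod>x\<in>A. of_bool (P x) :: 'b::comm_semiring_1) = of_bool (\<forall>x\<in>A. P x)"
  by (induction A rule: finite_induct) auto

lemma of_bool_none_eq_sum_Pow: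
  fixes Q :: "'a \<Rightarrow> bool"
  assumes "finite P"
  shows "(of_bool (\<forall>p\<in>P. \<not> Q p) :: 'b::comm_ring_1)
           = (\<Sum>D\<in>Pow P. (-1) ^ card D * of_bool (\<forall>p\<in>D. Q p))"
proof -
  have "(of_bool (\<forall>p\<in>P. \<not> Q p) :: 'b) = (\<Prod>p\<in>P. - of_bool (Q p) + 1)"
    using assms by (simp add: prod_of_bool[symmetric] of_bool_not_iff)
  also have "\<dots> = (\<Sum>D\<in>Pow P. (\<Prod>p\<in>D. - of_bool (Q p)) * (\<Prod>p\<in>P - D. 1))"
    using assms by (rule prod_add)
  also have "\<dots> = (\<Sum>D\<in>Pow P. (-1) ^ card D * of_bool (\<forall>p\<in>D. Q p))"
    using assms
    by (intro sum.cong refl) (auto simp: prod_uminus prod_of_bool finite_subset)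
  finally show ?thesis .
qed

definition Jacobi_on_multiples :: "nat set \<Rightarrow> nat \<Rightarrow> int \<Rightarrow> real" where
  "Jacobi_on_multiples D q a = of_bool (\<forall>p\<in>D. int p dvd a) * real_of_int (Jacobi a q)"

lemma Jacobi_on_multiples_cong:
  assumes "finite D" "[a = b] (mod int (\<Prod>D * q))"
  shows "Jacobi_on_multiples D q a = Jacobi_on_multiples D q b"
proof -
  have "[a = b] (mod int p)" if "p \<in> D" for p
  proof -
    have "p dvd \<Prod>D * q"
      using assms(1) that by (intro dvd_mult2 dvd_prodI)
    with assms(2) show ?thesis
      by (metis cong_dvd_modulus of_nat_dvd_iff)
  qed
  then have "(\<forall>p\<in>D. int p dvd a) \<longleftrightarrow> (\<forall>p\<in>D. int p dvd b)"
    using cong_dvd_iff by blast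
  moreover have "[a = b] (mod int q)"
    using assms(2) by (rule cong_dvd_modulus) simp
  then have "Jacobi a q = Jacobi b q"
    by (rule Jacobi_cong)
  ultimately show ?thesis
    unfolding Jacobi_on_multiples_def by simp
qed

lemma sum_Jacobi_on_multiples_period_eq_0:
  fixes D :: "nat set" and \<alpha> :: int and q :: nat
  assumes q: "squarefree q" "odd q" "q > 1" "coprime \<alpha> (int q)"
    and D: "finite D" "\<forall>p\<in>D. prime p" "coprime (\<Prod>D) q"
  defines "M \<equiv> int (\<Prod>D * q)"
  shows "(\<Sum>x\<in>{0..<M}. \<Sum>y\<in>{0..<M}. Jacobi_on_multiples D q (y^2 + \<alpha> * x^2)) = 0"
proof -
  have "coprime (int (\<Prod>D)) (int q)"
    using D(3) by (simp only: coprime_int_iff)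
  then obtain u v where uv: "Jacobi (u^2 + \<alpha> * v^2) q = -1" "coprime (u^2 + \<alpha> * v^2) M"
    using binary_form_Jacobi_twist[OF q] unfolding M_def of_nat_mult by blast
  have "Jacobi_on_multiples D q ((u^2 + \<alpha> * v^2) * a) = - Jacobi_on_multiples D q a" for a
  proof -
    have "int p dvd (u^2 + \<alpha> * v^2) * a \<longleftrightarrow> int p dvd a" if "p \<in> D" for p
    proof -
      have "int p dvd M" unfolding M_def using that D by (simp add: dvd_prodI)
      then have "coprime (int p) (u^2 + \<alpha> * v^2)"
        using uv(2) by (metis coprime_commute coprime_divisors dvd_refl)
      then show ?thesis by (simp add: coprime_dvd_mult_right_iff)
    qed
    then show ?thesis
      unfolding Jacobi_on_multiples_def using uv(1) q(2) by (simp add: Jacobi_mult)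
  qed
  moreover have "M > 0"
    unfolding M_def using D q by (simp add: prime_gt_0_nat prod_pos)
  ultimately have "(\<Sum>y\<in>{0..<M}. \<Sum>x\<in>{0..<M}. Jacobi_on_multiples D q (y^2 + \<alpha> * x^2)) = 0"
    using uv(2) Jacobi_on_multiples_cong[OF D(1)] unfolding M_def
    by (intro sum_binary_form_odd_eq_0) auto
  then show ?thesis
    by (subst sum.swap)
qed

lemma sum_abs_Jacobi_on_multiples_le:
  fixes D :: "nat set" and b :: int and q :: nat
  assumes "finite D" "\<forall>p\<in>D. prime p"
  shows "(\<Sum>y\<in>{0..<int (\<Prod>D * q)}. \<bar>Jacobi_on_multiples D q (y^2 + b)\<bar>) \<le> q * 2 ^ card D"
proof -
  have "(\<Sum>y\<in>{0..<int (\<Prod>D * q)}. \<bar>Jacobi_on_multiples D q (y^2 + b)\<bar>)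
      \<le> (\<Sum>y\<in>{0..<int (\<Prod>D * q)}. of_bool (\<forall>p\<in>D. int p dvd y^2 + b))"
    unfolding Jacobi_on_multiples_def using abs_Jacobi_le_1
    by (intro sum_mono) (auto simp: abs_mult of_int_abs[symmetric] simp del: of_int_abs)
  also have "\<dots> = card {y\<in>{0..<int (\<Prod>D) * int q}. \<forall>p\<in>D. int p dvd y^2 + b}"
    by (simp add: Int_def conj_commute)
  also have "\<dots> \<le> real (q * 2 ^ card D)"
    by (intro of_nat_mono card_square_roots_mod_prod_primes assms)
  finally show ?thesis by simp
qed

lemma sum_box_Jacobi_on_multiples:
  fixes D :: "nat set" and \<alpha> :: int and q N :: nat
  assumes q: "squarefree q" "odd q" "q > 1" "coprime \<alpha> (int q)"
    and D: "finite D" "\<forall>p\<in>D. prime p" "coprime (\<Prod>D) q"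
  shows "\<bar>\<Sum>x\<in>{-int N..int N}. \<Sum>y\<in>{-int N..int N}. Jacobi_on_multiples D q (y^2 + \<alpha> * x^2)\<bar>
         \<le> 2 * (2 * real N + 1) * (real q * 2 ^ card D)"
proof -
  define M where "M = \<Prod>D * q"
  have "M > 0"
    unfolding M_def using D q by (simp add: prime_gt_0_nat prod_pos)
  have per: "Jacobi_on_multiples D q (y^2 + \<alpha> * x^2) = Jacobi_on_multiples D q (y'^2 + \<alpha> * x'^2)"
    if "[x = x'] (mod int M)" "[y = y'] (mod int M)" for x x' y y'
    using that D(1) unfolding M_def by (intro Jacobi_on_multiples_cong cong_add cong_mult cong_pow cong_refl)
  have zero: "(\<Sum>x\<in>{0..<int M}. \<Sum>y\<in>{0..<int M}. Jacobi_on_multiples D q (y^2 + \<alpha> * x^2)) = 0"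
    unfolding M_def by (rule sum_Jacobi_on_multiples_period_eq_0[OF q D])
  have row: "(\<Sum>y\<in>{0..<int M}. \<bar>Jacobi_on_multiples D q (y^2 + \<alpha> * x^2)\<bar>) \<le> q * 2 ^ card D" for x
    unfolding M_def by (rule sum_abs_Jacobi_on_multiples_le[OF D(1,2)])
  have "\<bar>\<Sum>x\<in>{-int N..<-int N + int (2 * N + 1)}. \<Sum>y\<in>{-int N..<-int N + int (2 * N + 1)}.
          Jacobi_on_multiples D q (y^2 + \<alpha> * x^2)\<bar> \<le> 2 * real (2 * N + 1) * (q * 2 ^ card D)"
    by (rule sum_square_periodic_zero_mean[OF \<open>M > 0\<close> per zero row])
  moreover have "{-int N..<-int N + int (2 * N + 1)} = {-int N..int N}"
    by auto
  ultimately show ?thesis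
    by (simp add: ring_distribs)
qed

lemma Lsum_eq_sum_Pow:
  assumes "q2 > 0"
  shows "real_of_int (Lsum \<alpha> q1 q2 N) = (\<Sum>D\<in>Pow (prime_factors q2). (-1) ^ card D *
           (\<Sum>x\<in>{-int N..int N}. \<Sum>y\<in>{-int N..int N}. Jacobi_on_multiples D q1 (y^2 + \<alpha> * x^2)))"
proof -
  define W where "W = {-int N..int N}"
  define P where "P = prime_factors q2"
  define J where "J a = real_of_int (Jacobi a q1)" for a
  have "real_of_int (Lsum \<alpha> q1 q2 N)
      = (\<Sum>(y, x)\<in>W \<times> W. of_bool (coprime (y^2 + \<alpha> * x^2) (int q2)) * J (y^2 + \<alpha> * x^2))"
    unfolding Lsum_def W_def J_def of_int_sum
    by (auto intro!: sum.cong simp: case_prod_beta)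
  also have "\<dots> = (\<Sum>y\<in>W. \<Sum>x\<in>W. of_bool (coprime (y^2 + \<alpha> * x^2) (int q2)) * J (y^2 + \<alpha> * x^2))"
    by (simp only: sum.cartesian_product)
  also have "\<dots> = (\<Sum>x\<in>W. \<Sum>y\<in>W. of_bool (coprime (y^2 + \<alpha> * x^2) (int q2)) * J (y^2 + \<alpha> * x^2))"
    by (rule sum.swap)
  also have "\<dots> = (\<Sum>x\<in>W. \<Sum>y\<in>W. of_bool (\<forall>p\<in>P. \<not> int p dvd y^2 + \<alpha> * x^2) * J (y^2 + \<alpha> * x^2))"
    unfolding P_def by (simp only: coprime_int_iff_prime_factors[OF assms])
  also have "\<dots> = (\<Sum>x\<in>W. \<Sum>y\<in>W. \<Sum>D\<in>Pow P. (-1) ^ card D *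
                 (of_bool (\<forall>p\<in>D. int p dvd y^2 + \<alpha> * x^2) * J (y^2 + \<alpha> * x^2)))"
    unfolding P_def by (simp only: of_bool_none_eq_sum_Pow[OF finite_set_mset] sum_distrib_right mult.assoc)
  also have "\<dots> = (\<Sum>D\<in>Pow P. (-1) ^ card D * (\<Sum>x\<in>W. \<Sum>y\<in>W. Jacobi_on_multiples D q1 (y^2 + \<alpha> * x^2)))"
    unfolding Jacobi_on_multiples_def J_def sum_distrib_left by (simp only: sum.swap[of _ "Pow P"])
  finally show ?thesis
    unfolding W_def P_def .
qed

lemma Lsum_bound:
  fixes \<alpha> :: int and q1 q2 N :: nat
  assumes q1: "squarefree q1" "odd q1" "q1 > 1" "coprime \<alpha> (int q1)"
    and q2: "q2 > 0" "coprime q1 q2"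
  shows "\<bar>real_of_int (Lsum \<alpha> q1 q2 N)\<bar> \<le> 2 * (2 * real N + 1) * (real q1 * 4 ^ card (prime_factors q2))"
proof -
  define P where "P = prime_factors q2"
  define B where "B = 2 * (2 * real N + 1) * (real q1 * 2 ^ card P)"
  have "\<bar>\<Sum>x\<in>{-int N..int N}. \<Sum>y\<in>{-int N..int N}. Jacobi_on_multiples D q1 (y^2 + \<alpha> * x^2)\<bar> \<le> B"
    if "D \<in> Pow P" for D
  proof -
    have D: "finite D" "\<forall>p\<in>D. prime p"
      using that finite_subset unfolding P_def by auto
    have "coprime p q1" if "p \<in> D" for p
    proof -
      have "p dvd q2"
        using \<open>D \<in> Pow P\<close> that unfolding P_def by auto
      then show ?thesis
        using q2(2) coprime_divisors[OF _ dvd_refl] by (metis coprime_commute)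
    qed
    then have "coprime (\<Prod>D) q1"
      by (rule prod_coprime_left)
    with sum_box_Jacobi_on_multiples[OF q1 D] have "\<bar>\<Sum>x\<in>{-int N..int N}. \<Sum>y\<in>{-int N..int N}.
        Jacobi_on_multiples D q1 (y^2 + \<alpha> * x^2)\<bar> \<le> 2 * (2 * real N + 1) * (real q1 * 2 ^ card D)" .
    also have "\<dots> \<le> B"
      unfolding B_def using that by (intro mult_left_mono power_increasing card_mono) (auto simp: P_def)
    finally show ?thesis .
  qed
  then have "\<bar>real_of_int (Lsum \<alpha> q1 q2 N)\<bar> \<le> (\<Sum>D\<in>Pow P. B)"
    unfolding Lsum_eq_sum_Pow[OF q2(1)] P_def[symmetric]
    by (intro order.trans[OF sum_abs] sum_mono) (simp add: abs_mult)
  also have "\<dots> = 2 * (2 * real N + 1) * (real q1 * 4 ^ card P)"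
    unfolding B_def by (simp add: P_def card_Pow power_mult_distrib[symmetric])
  finally show ?thesis
    unfolding P_def .
qed

lemma rad_mult_factorD:
  assumes "q1 * q2 = rad q" "odd q" "coprime \<alpha> (int q)"
  shows "squarefree q1" "odd q1" "coprime \<alpha> (int q1)" "coprime q1 q2" "q2 dvd q"
proof -
  have "q1 dvd q" "q2 dvd q"
    using assms(1) rad_dvd[of q] by (metis dvd_mult_left, metis dvd_mult_right)
  then show "odd q1" "coprime \<alpha> (int q1)" "q2 dvd q"
    using assms(2,3) by (auto dest: dvd_trans coprime_divisors[OF dvd_refl, of _ "int q1" "int q"])
  show "squarefree q1" "coprime q1 q2"
    using squarefree_rad[of q] assms(1)
    by (metis squarefree_multD(1), metis squarefree_mult_imp_coprime)
qed

lemma Lsum_0: "q1 > 1 \<Longrightarrow> Lsum \<alpha> q1 q2 0 = 0"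
  unfolding Lsum_def by (intro sum.neutral) (auto simp: Jacobi_0)

theorem mainTheorem8:
  "\<forall>\<epsilon>::real. \<epsilon> > 0 \<longrightarrow> (\<exists>C::real. \<forall>(q::nat) (\<alpha>2::int) (q1::nat) (q2::nat) (N::nat).
      odd q \<and> coprime \<alpha>2 (int q) \<and> q1 > 1 \<and> q2 > 0 \<and> q1 * q2 = rad q \<and> N \<le> q \<longrightarrow>
      \<bar>real_of_int (Lsum \<alpha>2 q1 q2 N)\<bar> \<le> C * real N * real q1 ^ 2 * real q powr \<epsilon>)"
proof (intro allI impI)
  fix \<epsilon> :: real assume "\<epsilon> > 0"
  then obtain C where C: "\<And>n. n > 0 \<Longrightarrow> 4 ^ card (prime_factors n) \<le> C * real n powr \<epsilon>"
    using power_card_prime_factors_le_powr[of 4 \<epsilon>] by auto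
  have "\<bar>real_of_int (Lsum \<alpha> q1 q2 N)\<bar> \<le> 6 * C * real N * real q1 ^ 2 * real q powr \<epsilon>"
    if "odd q" "coprime \<alpha> (int q)" "q1 > 1" "q2 > 0" "q1 * q2 = rad q" for q \<alpha> q1 q2 N
  proof (cases "N = 0")
    case True
    then show ?thesis
      using Lsum_0[OF \<open>q1 > 1\<close>] by simp
  next
    case False
    note q1 = rad_mult_factorD[OF \<open>q1 * q2 = rad q\<close> \<open>odd q\<close> \<open>coprime \<alpha> (int q)\<close>]
    have "4 ^ card (prime_factors q2) \<le> C * real q2 powr \<epsilon>"
      using C \<open>q2 > 0\<close> by blast
    also have "\<dots> \<le> C * real q powr \<epsilon>"
      using C[of 1] \<open>\<epsilon> > 0\<close> q1(5) \<open>odd q\<close> \<open>q2 > 0\<close>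
      by (intro mult_left_mono powr_mono2) (auto intro: dvd_imp_le simp: odd_pos)
    finally have factor_bound: "real q1 * 4 ^ card (prime_factors q2) \<le> real q1 ^ 2 * (C * real q powr \<epsilon>)"
      using \<open>q1 > 1\<close> by (intro mult_mono) (auto simp: power2_eq_square)
    have "2 * (2 * real N + 1) \<le> 6 * real N"
      using False by simp
    then have "2 * (2 * real N + 1) * (real q1 * 4 ^ card (prime_factors q2))
        \<le> 6 * real N * (real q1 ^ 2 * (C * real q powr \<epsilon>))"
      using factor_bound by (rule mult_mono) auto
    with Lsum_bound[OF q1(1,2) \<open>q1 > 1\<close> q1(3) \<open>q2 > 0\<close> q1(4), of N] show ?thesis
      by (simp add: ac_simps)
  qed
  then show "\<exists>C. \<forall>q \<alpha>2 q1 q2 N. odd q \<and> coprime \<alpha>2 (int q) \<and> q1 > 1 \<and> q2 > 0 \<and> q1 * q2 = rad q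
      \<and> N \<le> q \<longrightarrow> \<bar>real_of_int (Lsum \<alpha>2 q1 q2 N)\<bar> \<le> C * real N * real q1 ^ 2 * real q powr \<epsilon>"
    by blast
qed

end
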